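(* Let $G=(V,E)$ be a unit disk graph, let $r>1$ be real and $k\ge 8$ an integer, let $\theta=2\pi/k$ and $\lambda=\frac{1}{2r\cos\theta}$, and suppose $\cos\theta-\sin\theta>\frac{1}{\lambda+1}$. Let $YES_k$ be the output of the Yao-Sparse-Sink algorithm run on $G$ with parameters $k$ and $r$. Then $YES_k$ has maximum degree at most $k(k+2)$, and for every real $t\ge \frac{\lambda/\cos(2\theta)}{(\lambda+1)(\cos\theta-\sin\theta)-1}$, $YES_k$ is a length $t$-spanner of $G$.
   Context: Unit disk graph: $V$ a finite point set in the plane, $E=\{uv:|uv|\le1\}$ with $|uv|$ Euclidean distance; $G$ connected. A subgraph $H$ on the same vertex set is a length $t$-spanner of $G$ if for all $u,v$ the length of a shortest $uv$-path in $H$ is at most $t$ times that in $G$. Cones: at each point $x$ the plane is partitioned into $k$ half-open half-closed cones with apex $x$ of angle $\theta$, bounded by $k$ equally spaced rays (same directions at every node); $K_x(y)$ is the cone with apex $x$ containing $y$. Identifiers: nodes have distinct IDs; $\mathrm{ID}(\overrightarrow{xy})=(|xy|,\mathrm{ID}(x),\mathrm{ID}(y))$ compared lexicographically; $\mathrm{ID}(xy)=\min\{\mathrm{ID}(\overrightarrow{xy}),\mathrm{ID}(\overrightarrow{yx})\}$. The aspect ratio of a nonempty edge set is the length of its longest edge divided by the length of its shortest edge. Yao-Sparse-Sink algorithm. Step 1 (Yao step): for each node $x$ and each cone $K_x$ containing the other endpoint of some edge of $E$ incident to $x$, add to $E_Y$ the directed edge $\overrightarrow{xy}$ where $xy$ is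 such an edge with lowest $\mathrm{ID}(xy)$. Step 2 (filtering): $E_{YE}=\emptyset$; for each node $v$ and each cone $K_v$, let $F$ be the set of edges $\overrightarrow{xv}\in E_Y$ with $x\in K_v$; if $F\neq\emptyset$, let $\overrightarrow{uv}$ be the edge of $F$ of minimum ID, and for each integer $i\ge1$ let $F_i=\{\overrightarrow{ab}\in F: |uv|r^{i-1}\le|ab|<|uv|r^{i}\}$ (these sets partition $F$); for each nonempty $F_i$ add to $E_{YE}$ the edge of $F_i$ of smallest ID. Step 3 (Sink step on $(V,E_{YE})$): set $E_{YES}=\emptyset$; for each node $v$ and each cone $K_v$: let $I$ be the set of $x$ with $\overrightarrow{xv}\in E_{YE}$, $x\in K_v$; set $I(v)\leftarrow I$, $J\leftarrow(v)$ (ordered sequence), $T(v)\leftarrow\emptyset$; repeat until $I$ is empty: remove the first vertex $x$ from $J$; for each cone $K_x$, let $w\in I(x)\cap K_x$ minimize $\mathrm{ID}(\overrightarrow{wx})$ (if any), add $\overrightarrow{wx}$ to $T(v)$, move $w$ from $I$ to $J$, set $I(w)\leftarrow I(x)\cap K_x$; then add the edges of $T(v)$ to $E_{YES}$. Output $YES_k=(V,E_{YES})$ viewed as an undirected graph. *)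

theory Defs
  imports "HOL-Analysis.Complex_Transcendental" "HOL-Library.Product_Lexorder" "HOL-Library.Extended_Real"
begin

text \<open>Points of the plane are complex numbers; Euclidean distance is cmod (u - v).
  Node identifiers are given by a function idf, injective on the vertex set.\<close>

definition udg_edges :: "complex set \<Rightarrow> (complex \<times> complex) set" where
  "udg_edges V = {(u, v). u \<in> V \<and> v \<in> V \<and> u \<noteq> v \<and> cmod (u - v) \<le> 1}"

text \<open>Walks, their lengths and shortest path distance (Inf over the empty set is \<infinity>).\<close>

definition walk :: "(complex \<times> complex) set \<Rightarrow> complex list \<Rightarrow> bool" where
  "walk Es p \<longleftrightarrow> p \<noteq> [] \<and> (\<forall>i < length p - 1. (p ! i, p ! Suc i) \<in> Es)"

definition walk_len :: "complex list \<Rightarrow> real" where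
  "walk_len p = (\<Sum>i < length p - 1. cmod (p ! Suc i - p ! i))"

definition sp_dist :: "(complex \<times> complex) set \<Rightarrow> complex \<Rightarrow> complex \<Rightarrow> ereal" where
  "sp_dist Es u v = (INF p \<in> {p. walk Es p \<and> hd p = u \<and> last p = v}. ereal (walk_len p))"

definition connected_graph :: "complex set \<Rightarrow> (complex \<times> complex) set \<Rightarrow> bool" where
  "connected_graph V Es \<longleftrightarrow> (\<forall>u\<in>V. \<forall>v\<in>V. \<exists>p. walk Es p \<and> hd p = u \<and> last p = v)"

definition is_length_spanner ::
  "complex set \<Rightarrow> (complex \<times> complex) set \<Rightarrow> (complex \<times> complex) set \<Rightarrow> real \<Rightarrow> bool" where
  "is_length_spanner V H G t \<longleftrightarrow> (\<forall>u\<in>V. \<forall>v\<in>V. sp_dist H u v \<le> ereal t * sp_dist G u v)"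

text \<open>Cones: k half-open cones of angle 2 pi / k with apex x, bounded by rays at
  angles phi + i * 2 pi / k (same directions at every node); cone number c is
  [phi + c theta, phi + (c+1) theta) modulo 2 pi.  The apex itself lies in no cone.\<close>

definition cone_idx :: "nat \<Rightarrow> real \<Rightarrow> complex \<Rightarrow> complex \<Rightarrow> nat" where
  "cone_idx k \<phi> x y = nat (\<lfloor>(Arg2pi (y - x) - \<phi>) / (2 * pi / real k)\<rfloor> mod int k)"

definition in_cone :: "nat \<Rightarrow> real \<Rightarrow> complex \<Rightarrow> nat \<Rightarrow> complex \<Rightarrow> bool" where
  "in_cone k \<phi> x c y \<longleftrightarrow> y \<noteq> x \<and> cone_idx k \<phi> x y = c"

definition dID :: "(complex \<Rightarrow> nat) \<Rightarrow> complex \<Rightarrow> complex \<Rightarrow> real \<times> nat \<times> nat" where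
  "dID idf x y = (cmod (x - y), idf x, idf y)"

definition uID :: "(complex \<Rightarrow> nat) \<Rightarrow> complex \<Rightarrow> complex \<Rightarrow> real \<times> nat \<times> nat" where
  "uID idf x y = min (dID idf x y) (dID idf y x)"

text \<open>Step 1: Yao step. (x,y) is the directed edge from x to y.\<close>

definition yao_edges :: "nat \<Rightarrow> real \<Rightarrow> (complex \<Rightarrow> nat) \<Rightarrow> complex set \<Rightarrow> (complex \<times> complex) set" where
  "yao_edges k \<phi> idf V = {(x, y). (x, y) \<in> udg_edges V \<and>
     (\<forall>z. (x, z) \<in> udg_edges V \<and> cone_idx k \<phi> x z = cone_idx k \<phi> x y \<longrightarrow> uID idf x y \<le> uID idf x z)}"

definition filt_F :: "nat \<Rightarrow> real \<Rightarrow> (complex \<Rightarrow> nat) \<Rightarrow> complex set \<Rightarrow> complex \<Rightarrow> nat \<Rightarrow> (complex \<times> complex) set" where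
  "filt_F k \<phi> idf V v c = {(x, w). (x, w) \<in> yao_edges k \<phi> idf V \<and> w = v \<and> in_cone k \<phi> v c x}"

definition in_bucket :: "real \<Rightarrow> real \<Rightarrow> nat \<Rightarrow> real \<Rightarrow> bool" where
  "in_bucket r L i d \<longleftrightarrow> L * r ^ (i - 1) \<le> d \<and> d < L * r ^ i"

definition ye_edges :: "nat \<Rightarrow> real \<Rightarrow> real \<Rightarrow> (complex \<Rightarrow> nat) \<Rightarrow> complex set \<Rightarrow> (complex \<times> complex) set" where
  "ye_edges k r \<phi> idf V = {(a, v). \<exists>c. (a, v) \<in> filt_F k \<phi> idf V v c \<and>
     (let F = filt_F k \<phi> idf V v c;
          L = Min ((\<lambda>(x, y). cmod (x - y)) ` F)
      in \<exists>i\<ge>1. in_bucket r L i (cmod (a - v)) \<and>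
           (\<forall>(b, w) \<in> F. in_bucket r L i (cmod (b - w)) \<longrightarrow> dID idf a v \<le> dID idf b w))}"

text \<open>Step 3: sink step. sink_tree x S e holds iff e is an edge of the tree built
  at x from the vertex set S (the set I(x) without x): for each cone of x meeting S, the
  vertex w of S in that cone minimising ID of w to x is linked to x, and recursively the
  tree at w is built from the remaining vertices of S in that cone.\<close>

inductive sink_tree :: "nat \<Rightarrow> real \<Rightarrow> (complex \<Rightarrow> nat) \<Rightarrow> complex \<Rightarrow> complex set \<Rightarrow> complex \<times> complex \<Rightarrow> bool"
  for k \<phi> idf where
  edge: "\<lbrakk> w \<in> S; in_cone k \<phi> x c w;
          \<forall>y\<in>S. in_cone k \<phi> x c y \<longrightarrow> dID idf w x \<le> dID idf y x \<rbrakk>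
         \<Longrightarrow> sink_tree k \<phi> idf x S (w, x)"
| rec: "\<lbrakk> w \<in> S; in_cone k \<phi> x c w;
          \<forall>y\<in>S. in_cone k \<phi> x c y \<longrightarrow> dID idf w x \<le> dID idf y x;
          sink_tree k \<phi> idf w {y \<in> S. in_cone k \<phi> x c y \<and> y \<noteq> w} e \<rbrakk>
         \<Longrightarrow> sink_tree k \<phi> idf x S e"

definition yes_edges :: "nat \<Rightarrow> real \<Rightarrow> real \<Rightarrow> (complex \<Rightarrow> nat) \<Rightarrow> complex set \<Rightarrow> (complex \<times> complex) set" where
  "yes_edges k r \<phi> idf V = {e. \<exists>v\<in>V. \<exists>c<k.
     sink_tree k \<phi> idf v {x. (x, v) \<in> ye_edges k r \<phi> idf V \<and> in_cone k \<phi> v c x} e}"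

definition YES :: "nat \<Rightarrow> real \<Rightarrow> real \<Rightarrow> (complex \<Rightarrow> nat) \<Rightarrow> complex set \<Rightarrow> (complex \<times> complex) set" where
  "YES k r \<phi> idf V = yes_edges k r \<phi> idf V \<union> (yes_edges k r \<phi> idf V)\<inverse>"

definition degree :: "(complex \<times> complex) set \<Rightarrow> complex \<Rightarrow> nat" where
  "degree Es v = card {u. (v, u) \<in> Es}"

end

theory Submission
  imports Defs
begin

(*
  Let d = cos \<theta> - sin \<theta>.  If y and z lie in a common cone of angle \<theta> at x and
  |xz| \<le> |xy|, then |yz| \<le> |xy| - d |xz|.  In the sink tree built at v, a vertex y lies in
  the subtree of the child w of v that is nearest to v in the cone of y, so by induction y
  reaches v within |yw| / d + |wv| \<le> |yv| / d.  A Yao edge xv removed by the filtering step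
  leaves a kept edge av in the same cone with |av| \<le> |xv| < r |av|; the edge xa is shorter
  than xv, so induction on the edge length shows that every edge uv of G is replaced in YES_k
  by a walk of length at most t |uv|.  The bound on t is exactly what closes this induction.

  For the degree: v has at most k Yao out-edges, one per cone, so it lies in the sink trees
  of at most k other vertices.  In each of those it has one parent and at most one child per
  cone at v, and in each of its own k sink trees it has a single child: k + k * k + k in all.
*)

section \<open>Cones\<close>

definition cone_gap :: "nat \<Rightarrow> real" where
  "cone_gap k = cos (2 * pi / k) - sin (2 * pi / k)"

lemma cone_gap_le_1:
  assumes "2 \<le> k"
  shows "cone_gap k \<le> 1"
proof -
  have "0 \<le> sin (2 * pi / k)"
    using assms by (intro sin_ge_zero) (auto simp: field_simps)
  then show ?thesis
    unfolding cone_gap_def using cos_le_one[of "2 * pi / k"] by linarith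
qed

lemma cone_idx_less: "0 < k \<Longrightarrow> cone_idx k \<phi> x y < k"
  unfolding cone_idx_def by (simp add: nat_less_iff)

lemma cos_Arg2pi_diff_ge_if_same_cone:
  assumes k: "2 \<le> k" and same: "cone_idx k \<phi> x y = cone_idx k \<phi> x z"
  shows "cos (2 * pi / k) \<le> cos (Arg2pi (y - x) - Arg2pi (z - x))"
proof -
  define \<theta> where "\<theta> = 2 * pi / k"
  have \<theta>: "0 < \<theta>" "\<theta> \<le> pi"
    using k by (auto simp: \<theta>_def field_simps)
  define A where "A = (Arg2pi (y - x) - \<phi>) / \<theta>"
  define B where "B = (Arg2pi (z - x) - \<phi>) / \<theta>"
  have "\<lfloor>A\<rfloor> mod int k = \<lfloor>B\<rfloor> mod int k"
    using same k unfolding cone_idx_def A_def B_def \<theta>_def by (simp add: nat_eq_iff2)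
  then obtain m where m: "\<lfloor>A\<rfloor> - \<lfloor>B\<rfloor> = int k * m"
    by (metis dvdE mod_eq_dvd_iff)
  define \<delta> where "\<delta> = Arg2pi (y - x) - Arg2pi (z - x) - 2 * pi * m"
  have "\<delta> = \<theta> * ((A - B) - real k * m)"
    using \<theta> k unfolding \<delta>_def A_def B_def \<theta>_def by (simp add: field_simps)
  moreover have "\<bar>(A - B) - real k * m\<bar> < 1"
  proof -
    have "real_of_int (\<lfloor>A\<rfloor> - \<lfloor>B\<rfloor>) = real k * m"
      using m by simp
    then show ?thesis
      by linarith
  qed
  ultimately have "\<bar>\<delta>\<bar> < \<theta>"
    using \<theta> by (simp add: abs_mult)
  then have "cos \<theta> \<le> cos \<bar>\<delta>\<bar>"
    using \<theta> by (intro cos_monotone_0_pi_le) auto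
  also have "cos \<bar>\<delta>\<bar> = cos (Arg2pi (y - x) - Arg2pi (z - x))"
    unfolding \<delta>_def cos_abs_real by (simp add: cos_diff)
  finally show ?thesis
    by (simp add: \<theta>_def)
qed

lemma norm_diff_power2_Arg2pi:
  "(cmod (a - b))\<^sup>2 = (cmod a)\<^sup>2 + (cmod b)\<^sup>2 - 2 * cmod a * cmod b * cos (Arg2pi a - Arg2pi b)"
proof -
  have "(cmod (a - b))\<^sup>2 = (cmod a)\<^sup>2 + (cmod b)\<^sup>2 - 2 * (Re a * Re b + Im a * Im b)"
    unfolding cmod_power2 by (simp add: power2_eq_square algebra_simps)
  also have "Re a * Re b + Im a * Im b = cmod a * cmod b * cos (Arg2pi a - Arg2pi b)"
    by (simp add: cos_diff flip: cos_Arg2pi sin_Arg2pi) (simp add: algebra_simps)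
  finally show ?thesis
    by simp
qed

lemma same_cone_dist_le:
  assumes k: "2 \<le> k" and same: "cone_idx k \<phi> x y = cone_idx k \<phi> x z"
    and closer: "cmod (z - x) \<le> cmod (y - x)"
  shows "cmod (y - z) \<le> cmod (y - x) - cmod (z - x) * cone_gap k"
proof -
  define a b where "a = cmod (y - x)" and "b = cmod (z - x)"
  define c s where "c = cos (2 * pi / k)" and "s = sin (2 * pi / k)"
  have s: "0 \<le> s"
    using k unfolding s_def by (intro sin_ge_zero) (auto simp: field_simps)
  have "c\<^sup>2 + s\<^sup>2 = 1" "c \<le> 1"
    by (simp_all add: c_def s_def)
  have ab: "0 \<le> b" "b \<le> a"
    using closer by (simp_all add: a_def b_def)
  have "b * (c - s) \<le> a"
    using ab s \<open>c \<le> 1\<close> mult_left_le[of "c - s" b] by linarith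
  have "(cmod (y - z))\<^sup>2 \<le> a\<^sup>2 + b\<^sup>2 - 2 * a * b * c"
    using norm_diff_power2_Arg2pi[of "y - x" "z - x"] cos_Arg2pi_diff_ge_if_same_cone[OF k same]
      mult_left_mono[of c _ "a * b"] ab
    by (simp add: a_def b_def c_def mult.assoc)
  also have "\<dots> = (a - b * (c - s))\<^sup>2 - 2 * (b * s) * (a - b * c)"
    using \<open>c\<^sup>2 + s\<^sup>2 = 1\<close> by algebra
  also have "\<dots> \<le> (a - b * (c - s))\<^sup>2"
    using ab s \<open>c \<le> 1\<close> mult_left_le[of c b] by (simp add: mult_nonneg_nonneg)
  finally have "(cmod (y - z))\<^sup>2 \<le> (a - b * (c - s))\<^sup>2" .
  then have "cmod (y - z) \<le> a - b * (c - s)"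
    by (rule power2_le_imp_le) (use \<open>b * (c - s) \<le> a\<close> in simp)
  then show ?thesis
    by (simp add: a_def b_def c_def s_def cone_gap_def)
qed

lemma same_cone_detour_le:
  assumes "2 \<le> k" "0 < cone_gap k" "cone_idx k \<phi> x y = cone_idx k \<phi> x z"
    and "cmod (z - x) \<le> cmod (y - x)"
  shows "cmod (y - z) / cone_gap k + cmod (z - x) \<le> cmod (y - x) / cone_gap k"
proof -
  have "cmod (y - z) / cone_gap k \<le> (cmod (y - x) - cmod (z - x) * cone_gap k) / cone_gap k"
    using same_cone_dist_le[OF assms(1,3,4)] assms(2) by (simp add: divide_right_mono)
  then show ?thesis
    using assms(2) by (simp add: diff_divide_distrib)
qed

section \<open>Walks of bounded length\<close>

inductive reach_within :: "(complex \<times> complex) set \<Rightarrow> complex \<Rightarrow> complex \<Rightarrow> real \<Rightarrow> bool"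
  for H where
  refl: "0 \<le> B \<Longrightarrow> reach_within H u u B"
| step: "\<lbrakk>(u, w) \<in> H; reach_within H w v B; cmod (w - u) + B \<le> B'\<rbrakk> \<Longrightarrow> reach_within H u v B'"

lemma reach_within_mono: "reach_within H u v B \<Longrightarrow> B \<le> B' \<Longrightarrow> reach_within H u v B'"
  by (cases rule: reach_within.cases) (auto intro: reach_within.intros)

lemma reach_within_trans:
  "reach_within H u w B1 \<Longrightarrow> reach_within H w v B2 \<Longrightarrow> reach_within H u v (B1 + B2)"
proof (induction rule: reach_within.induct)
  case (refl B u)
  then show ?case
    using reach_within_mono by fastforce
next
  case (step u w' w B B')
  then show ?case
    by (intro reach_within.step[of u w' H _ "B + B2"]) auto
qed

lemma reach_within_edge: "(u, v) \<in> H \<Longrightarrow> reach_within H u v (cmod (v - u))"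
  by (auto intro: reach_within.intros)

lemma walk_Cons_Cons: "walk H (a # b # p) \<longleftrightarrow> (a, b) \<in> H \<and> walk H (b # p)"
  by (auto simp: walk_def less_Suc_eq_0_disj)

lemma walk_len_Cons_Cons: "walk_len (a # b # p) = cmod (b - a) + walk_len (b # p)"
  unfolding walk_len_def by (simp del: sum.lessThan_Suc add: sum.lessThan_Suc_shift)

lemma walk_if_reach_within:
  "reach_within H u v B \<Longrightarrow> \<exists>p. walk H p \<and> hd p = u \<and> last p = v \<and> walk_len p \<le> B"
proof (induction rule: reach_within.induct)
  case (refl B u)
  then show ?case
    by (intro exI[of _ "[u]"]) (simp add: walk_def walk_len_def)
next
  case (step u w v B B')
  then obtain p where p: "walk H (w # p)" "last (w # p) = v" "walk_len (w # p) \<le> B"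
    by (metis list.collapse walk_def)
  then show ?case
    using step by (intro exI[of _ "u # w # p"]) (auto simp: walk_Cons_Cons walk_len_Cons_Cons)
qed

lemma sp_dist_le_if_reach_within: "reach_within H u v B \<Longrightarrow> sp_dist H u v \<le> ereal B"
  unfolding sp_dist_def by (metis (mono_tags) INF_lower2 ereal_less_eq(3) mem_Collect_eq walk_if_reach_within)

lemma reach_within_if_walk:
  assumes "0 \<le> t" and edges: "\<And>a b. (a, b) \<in> G \<Longrightarrow> reach_within H a b (t * cmod (b - a))"
  shows "walk G p \<Longrightarrow> reach_within H (hd p) (last p) (t * walk_len p)"
proof (induction p rule: induct_list012)
  case 1
  then show ?case
    by (simp add: walk_def)
next
  case (2 u)
  then show ?case
    by (simp add: walk_len_def reach_within.refl)
next
  case (3 u w p)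
  then have "reach_within H u w (t * cmod (w - u))" "reach_within H w (last (w # p)) (t * walk_len (w # p))"
    by (auto simp: walk_Cons_Cons edges)
  then show ?case
    using reach_within_trans by (fastforce simp: walk_len_Cons_Cons distrib_left)
qed

lemma is_length_spanner_if_edges_stretched:
  assumes "0 < t" and "\<And>a b. (a, b) \<in> G \<Longrightarrow> reach_within H a b (t * cmod (b - a))"
  shows "is_length_spanner V H G t"
  unfolding is_length_spanner_def
proof (intro ballI)
  fix u v
  have "sp_dist H u v / ereal t \<le> ereal (walk_len p)"
    if "walk G p" "hd p = u" "last p = v" for p
  proof -
    have "sp_dist H u v \<le> ereal t * ereal (walk_len p)"
      using reach_within_if_walk[OF _ assms(2) that(1)] assms(1) that(2,3)
      by (simp add: sp_dist_le_if_reach_within)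
    then show ?thesis
      using assms(1) by (simp add: ereal_divide_le_pos)
  qed
  then have "sp_dist H u v / ereal t \<le> sp_dist G u v"
    unfolding sp_dist_def by (intro INF_greatest) blast
  then show "sp_dist H u v \<le> ereal t * sp_dist G u v"
    using assms(1) by (simp add: ereal_divide_le_pos)
qed

section \<open>Sink trees\<close>

text \<open>The side conditions of the two rules of sink_tree: the child w that x picks in its
  cone c, and the vertex set handed on to w.\<close>

definition cone_nearest ::
  "nat \<Rightarrow> real \<Rightarrow> (complex \<Rightarrow> nat) \<Rightarrow> complex \<Rightarrow> complex set \<Rightarrow> nat \<Rightarrow> complex \<Rightarrow> bool" where
  "cone_nearest k \<phi> idf x S c w \<longleftrightarrow>
     w \<in> S \<and> in_cone k \<phi> x c w \<and> (\<forall>y\<in>S. in_cone k \<phi> x c y \<longrightarrow> dID idf w x \<le> dID idf y x)"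

definition cone_rest :: "nat \<Rightarrow> real \<Rightarrow> complex \<Rightarrow> complex set \<Rightarrow> nat \<Rightarrow> complex \<Rightarrow> complex set" where
  "cone_rest k \<phi> x S c w = {y \<in> S. in_cone k \<phi> x c y \<and> y \<noteq> w}"

lemma sink_tree_root_edgeI:
  "cone_nearest k \<phi> idf x S c w \<Longrightarrow> sink_tree k \<phi> idf x S (w, x)"
  unfolding cone_nearest_def by (blast intro: sink_tree.edge)

lemma sink_tree_subtreeI:
  "cone_nearest k \<phi> idf x S c w \<Longrightarrow> sink_tree k \<phi> idf w (cone_rest k \<phi> x S c w) e
    \<Longrightarrow> sink_tree k \<phi> idf x S e"
  unfolding cone_nearest_def cone_rest_def by (blast intro: sink_tree.rec)

lemma sink_tree_cases [consumes 1, case_names root_edge subtree]: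
  assumes "sink_tree k \<phi> idf x S e"
  obtains c w where "e = (w, x)" "cone_nearest k \<phi> idf x S c w"
  | c w where "cone_nearest k \<phi> idf x S c w" "sink_tree k \<phi> idf w (cone_rest k \<phi> x S c w) e"
  using assms by (cases rule: sink_tree.cases) (auto simp: cone_nearest_def cone_rest_def)

lemma sink_tree_endpoints: "sink_tree k \<phi> idf x S e \<Longrightarrow> fst e \<in> S \<and> (snd e = x \<or> snd e \<in> S)"
  by (induction rule: sink_tree.induct) auto

lemma cone_nearest_exists:
  assumes "finite S" "y \<in> S" "in_cone k \<phi> x c y"
  obtains w where "cone_nearest k \<phi> idf x S c w"
proof -
  obtain w where "is_arg_min (\<lambda>w. dID idf w x) (\<lambda>w. w \<in> S \<and> in_cone k \<phi> x c w) w"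
    using ex_is_arg_min_if_finite[of "{w \<in> S. in_cone k \<phi> x c w}" "\<lambda>w. dID idf w x"] assms
    by auto
  then show ?thesis
    using that by (auto simp: cone_nearest_def is_arg_min_linorder)
qed

lemma cone_nearest_unique:
  assumes "inj_on idf S" "cone_nearest k \<phi> idf x S c w1" "cone_nearest k \<phi> idf x S c w2"
  shows "w1 = w2"
proof -
  have "dID idf w1 x = dID idf w2 x"
    using assms(2,3) unfolding cone_nearest_def by (meson order.antisym)
  then show ?thesis
    using assms unfolding cone_nearest_def dID_def by (auto dest: inj_onD)
qed

lemma card_cone_rest_less: "finite S \<Longrightarrow> w \<in> S \<Longrightarrow> card (cone_rest k \<phi> x S c w) < card S"
  unfolding cone_rest_def by (rule psubset_card_mono) auto

lemma cone_rest_subset: "cone_rest k \<phi> x S c w \<subseteq> S"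
  unfolding cone_rest_def by auto

lemma sink_tree_reach_within:
  assumes k: "2 \<le> k" and gap: "0 < cone_gap k"
  shows "\<lbrakk>finite S; x \<notin> S; \<And>e. sink_tree k \<phi> idf x S e \<Longrightarrow> e \<in> H; y \<in> S\<rbrakk>
    \<Longrightarrow> reach_within H y x (cmod (y - x) / cone_gap k)"
proof (induction "card S" arbitrary: x S y rule: less_induct)
  case less
  define c where "c = cone_idx k \<phi> x y"
  have y: "in_cone k \<phi> x c y"
    using less.prems by (auto simp: c_def in_cone_def)
  then obtain w where w: "cone_nearest k \<phi> idf x S c w"
    using cone_nearest_exists less.prems by metis
  then have wx: "reach_within H w x (cmod (x - w))"
    using less.prems(3) sink_tree_root_edgeI reach_within_edge by metis
  have "reach_within H y w (cmod (y - w) / cone_gap k)"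
  proof (cases "y = w")
    case True
    then show ?thesis
      by (simp add: reach_within.refl)
  next
    case False
    let ?S' = "cone_rest k \<phi> x S c w"
    have w_S: "w \<in> S" and "y \<in> ?S'" "w \<notin> ?S'"
      using w False less.prems(4) y by (auto simp: cone_nearest_def cone_rest_def)
    moreover have "finite ?S'"
      using less.prems(1) cone_rest_subset finite_subset by metis
    moreover have "\<And>e. sink_tree k \<phi> idf w ?S' e \<Longrightarrow> e \<in> H"
      using less.prems(3) sink_tree_subtreeI[OF w] by blast
    ultimately show ?thesis
      using less.hyps[OF card_cone_rest_less[OF less.prems(1) w_S]] by blast
  qed
  moreover have "cmod (y - w) / cone_gap k + cmod (x - w) \<le> cmod (y - x) / cone_gap k"
    using same_cone_detour_le[OF k gap, of \<phi> x y w] w y less.prems(4)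
    by (auto simp: cone_nearest_def in_cone_def dID_def less_eq_prod_def norm_minus_commute)
  ultimately show ?case
    using reach_within_trans[OF _ wx] reach_within_mono by blast
qed

lemma sink_tree_root_edge:
  assumes "sink_tree k \<phi> idf x S (w, x)" "x \<notin> S"
  shows "cone_nearest k \<phi> idf x S (cone_idx k \<phi> x w) w"
  using assms
proof (cases rule: sink_tree_cases)
  case (root_edge c w')
  then show ?thesis
    by (simp add: cone_nearest_def in_cone_def)
next
  case (subtree c w')
  then show ?thesis
    using sink_tree_endpoints[OF subtree(2)] subtree(1) cone_rest_subset assms(2)
    by (fastforce simp: cone_nearest_def)
qed

lemma sink_tree_common_subtree:
  assumes inj: "inj_on idf S"
    and e1: "sink_tree k \<phi> idf x S e1" "snd e1 \<noteq> x"
    and e2: "sink_tree k \<phi> idf x S e2" "snd e2 \<noteq> x"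
    and common: "{fst e1, snd e1} \<inter> {fst e2, snd e2} \<noteq> {}"
  obtains c w where "cone_nearest k \<phi> idf x S c w"
    "sink_tree k \<phi> idf w (cone_rest k \<phi> x S c w) e1" "sink_tree k \<phi> idf w (cone_rest k \<phi> x S c w) e2"
proof -
  obtain c1 w1 where w1: "cone_nearest k \<phi> idf x S c1 w1"
    and t1: "sink_tree k \<phi> idf w1 (cone_rest k \<phi> x S c1 w1) e1"
    using e1 by (cases rule: sink_tree_cases) auto
  obtain c2 w2 where w2: "cone_nearest k \<phi> idf x S c2 w2"
    and t2: "sink_tree k \<phi> idf w2 (cone_rest k \<phi> x S c2 w2) e2"
    using e2 by (cases rule: sink_tree_cases) auto
  have "in_cone k \<phi> x c1 (fst e1)" "in_cone k \<phi> x c1 (snd e1)"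
    "in_cone k \<phi> x c2 (fst e2)" "in_cone k \<phi> x c2 (snd e2)"
    using sink_tree_endpoints[OF t1] sink_tree_endpoints[OF t2] w1 w2
    by (auto simp: cone_nearest_def cone_rest_def)
  then have "c1 = c2"
    using common by (auto simp: in_cone_def)
  then have "w1 = w2"
    using cone_nearest_unique[OF inj w1] w2 by blast
  then show ?thesis
    using that w1 t1 t2 \<open>c1 = c2\<close> by blast
qed

lemma sink_tree_children_distinct_cones:
  "\<lbrakk>finite S; inj_on idf S; x \<notin> S; sink_tree k \<phi> idf x S (w1, z); sink_tree k \<phi> idf x S (w2, z);
    cone_idx k \<phi> z w1 = cone_idx k \<phi> z w2\<rbrakk> \<Longrightarrow> w1 = w2"
proof (induction "card S" arbitrary: x S rule: less_induct)
  case less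
  show ?case
  proof (cases "z = x")
    case True
    then show ?thesis
      using less.prems sink_tree_root_edge cone_nearest_unique by metis
  next
    case False
    obtain c w where w: "cone_nearest k \<phi> idf x S c w"
      and "sink_tree k \<phi> idf w (cone_rest k \<phi> x S c w) (w1, z)"
        "sink_tree k \<phi> idf w (cone_rest k \<phi> x S c w) (w2, z)"
      by (rule sink_tree_common_subtree[OF less.prems(2,4) _ less.prems(5)]) (use False in auto)
    moreover have "w \<in> S" "w \<notin> cone_rest k \<phi> x S c w"
      using w by (auto simp: cone_nearest_def cone_rest_def)
    ultimately show ?thesis
      using less card_cone_rest_less cone_rest_subset
      by (metis finite_subset inj_on_subset)
  qed
qed

lemma sink_tree_parent_unique:
  "\<lbrakk>finite S; inj_on idf S; x \<notin> S; sink_tree k \<phi> idf x S (w, z1); sink_tree k \<phi> idf x S (w, z2)\<rbrakk>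
    \<Longrightarrow> z1 = z2"
proof (induction "card S" arbitrary: x S rule: less_induct)
  case less
  have not_both: False
    if root_edge: "sink_tree k \<phi> idf x S (w, x)" and edge: "sink_tree k \<phi> idf x S (w, z)" "z \<noteq> x" for z
  proof -
    have root: "cone_nearest k \<phi> idf x S (cone_idx k \<phi> x w) w"
      using sink_tree_root_edge root_edge less.prems(3) .
    obtain c w' where w': "cone_nearest k \<phi> idf x S c w'"
      and sub: "sink_tree k \<phi> idf w' (cone_rest k \<phi> x S c w') (w, z)"
      using edge by (cases rule: sink_tree_cases) auto
    have "w \<in> cone_rest k \<phi> x S c w'"
      using sink_tree_endpoints[OF sub] by simp
    then have "c = cone_idx k \<phi> x w" "w \<noteq> w'"
      by (auto simp: cone_rest_def in_cone_def)
    then show False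
      using cone_nearest_unique[OF less.prems(2) root] w' by blast
  qed
  show ?case
  proof (cases "z1 = x \<or> z2 = x")
    case True
    then show ?thesis
      using not_both less.prems(4,5) by metis
  next
    case False
    obtain c w' where w': "cone_nearest k \<phi> idf x S c w'"
      and "sink_tree k \<phi> idf w' (cone_rest k \<phi> x S c w') (w, z1)"
        "sink_tree k \<phi> idf w' (cone_rest k \<phi> x S c w') (w, z2)"
      by (rule sink_tree_common_subtree[OF less.prems(2,4) _ less.prems(5)]) (use False in auto)
    moreover have "w' \<in> S" "w' \<notin> cone_rest k \<phi> x S c w'"
      using w' by (auto simp: cone_nearest_def cone_rest_def)
    ultimately show ?thesis
      using less card_cone_rest_less cone_rest_subset
      by (metis finite_subset inj_on_subset)
  qed
qed

lemma finite_sink_tree_neighbours: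
  assumes "finite S"
  shows "finite {w. sink_tree k \<phi> idf x S (w, z)}" "finite {z. sink_tree k \<phi> idf x S (w, z)}"
proof -
  have "{w. sink_tree k \<phi> idf x S (w, z)} \<subseteq> S" "{z. sink_tree k \<phi> idf x S (w, z)} \<subseteq> insert x S"
    using sink_tree_endpoints by fastforce+
  then show "finite {w. sink_tree k \<phi> idf x S (w, z)}" "finite {z. sink_tree k \<phi> idf x S (w, z)}"
    using assms finite_subset by auto
qed

lemma card_sink_tree_parents_le:
  assumes "finite S" "inj_on idf S" "x \<notin> S"
  shows "card {z. sink_tree k \<phi> idf x S (w, z)} \<le> 1"
  using card_le_Suc0_iff_eq[OF finite_sink_tree_neighbours(2)[OF assms(1)]]
    sink_tree_parent_unique[OF assms] by auto

lemma card_sink_tree_children_le: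
  assumes "finite S" "inj_on idf S" "x \<notin> S" "0 < k"
  shows "card {w. sink_tree k \<phi> idf x S (w, z)} \<le> k"
proof -
  have "inj_on (cone_idx k \<phi> z) {w. sink_tree k \<phi> idf x S (w, z)}"
    using sink_tree_children_distinct_cones[OF assms(1-3)] by (auto intro: inj_onI)
  then show ?thesis
    using card_inj_on_le[of _ _ "{..<k}"] cone_idx_less[OF assms(4)] by fastforce
qed

lemma card_sink_tree_root_children_le:
  assumes "finite S" "inj_on idf S" "x \<notin> S" and cone: "\<forall>y\<in>S. in_cone k \<phi> x c y"
  shows "card {w. sink_tree k \<phi> idf x S (w, x)} \<le> 1"
proof -
  have "cone_idx k \<phi> x w = c" if "sink_tree k \<phi> idf x S (w, x)" for w
    using sink_tree_endpoints[OF that] cone by (auto simp: in_cone_def)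
  then show ?thesis
    using card_le_Suc0_iff_eq[OF finite_sink_tree_neighbours(1)[OF assms(1)]]
      sink_tree_children_distinct_cones[OF assms(1-3)] by auto
qed

section \<open>The Yao and filtering steps\<close>

lemma finite_udg_edges: "finite V \<Longrightarrow> finite (udg_edges V)"
  unfolding udg_edges_def by (rule finite_subset[of _ "V \<times> V"]) auto

lemma yao_edges_subset: "yao_edges k \<phi> idf V \<subseteq> udg_edges V"
  by (auto simp: yao_edges_def)

lemma ye_edges_subset: "ye_edges k r \<phi> idf V \<subseteq> yao_edges k \<phi> idf V"
  by (auto simp: ye_edges_def filt_F_def)

lemma norm_le_if_dID_le: "dID idf a b \<le> dID idf c d \<Longrightarrow> cmod (a - b) \<le> cmod (c - d)"
  by (auto simp: dID_def less_eq_prod_def)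

lemma norm_le_if_uID_le: "uID idf u w \<le> uID idf u v \<Longrightarrow> cmod (u - w) \<le> cmod (u - v)"
  by (auto simp: uID_def dID_def min_def less_eq_prod_def norm_minus_commute split: if_splits)

lemma uID_eq_imp_eq:
  assumes "inj_on idf V" "v \<in> V" "w1 \<in> V" "w2 \<in> V" "uID idf v w1 = uID idf v w2"
  shows "w1 = w2"
  using assms unfolding uID_def dID_def inj_on_def min_def by (auto split: if_splits)

lemma yao_edge_exists:
  assumes "finite V" "(u, v) \<in> udg_edges V"
  obtains w where "(u, w) \<in> yao_edges k \<phi> idf V" "cone_idx k \<phi> u w = cone_idx k \<phi> u v"
    "cmod (u - w) \<le> cmod (u - v)"
proof -
  let ?Z = "{z. (u, z) \<in> udg_edges V \<and> cone_idx k \<phi> u z = cone_idx k \<phi> u v}"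
  have "finite ?Z"
    using finite_udg_edges[OF assms(1)] by (rule finite_subset[rotated, OF finite_imageI[of _ snd]]) force
  then obtain w where "is_arg_min (uID idf u) (\<lambda>z. z \<in> ?Z) w"
    using ex_is_arg_min_if_finite[of ?Z "uID idf u"] assms(2) by blast
  then have "w \<in> ?Z" and "\<forall>z\<in>?Z. uID idf u w \<le> uID idf u z"
    by (auto simp: is_arg_min_linorder)
  then show ?thesis
    using that[of w] assms(2) norm_le_if_uID_le by (auto simp: yao_edges_def)
qed

lemma card_yao_out_le:
  assumes "inj_on idf V" "0 < k"
  shows "card {w. (v, w) \<in> yao_edges k \<phi> idf V} \<le> k"
proof -
  have "inj_on (cone_idx k \<phi> v) {w. (v, w) \<in> yao_edges k \<phi> idf V}"
  proof (rule inj_onI)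
    fix w1 w2
    assume "w1 \<in> {w. (v, w) \<in> yao_edges k \<phi> idf V}" "w2 \<in> {w. (v, w) \<in> yao_edges k \<phi> idf V}"
      and "cone_idx k \<phi> v w1 = cone_idx k \<phi> v w2"
    then have "uID idf v w1 = uID idf v w2" "v \<in> V" "w1 \<in> V" "w2 \<in> V"
      by (auto simp: yao_edges_def udg_edges_def intro: order.antisym)
    then show "w1 = w2"
      using uID_eq_imp_eq[OF assms(1)] by blast
  qed
  then show ?thesis
    using card_inj_on_le[of _ _ "{..<k}"] cone_idx_less[OF assms(2)] by fastforce
qed

lemma in_bucket_exists:
  assumes "1 < r" "0 < L" "L \<le> X"
  shows "\<exists>i\<ge>1. in_bucket r L i X"
proof -
  obtain n where "X / L < r ^ n"
    using real_arch_pow[OF assms(1)] by blast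
  then have "X < L * r ^ n"
    using assms(2) by (simp add: divide_less_eq mult.commute)
  then obtain i where "\<not> X < L * r ^ i" "X < L * r ^ Suc i"
    using ex_least_nat_less[of "\<lambda>n. X < L * r ^ n"] assms(3) by auto
  then show ?thesis
    by (intro exI[of _ "Suc i"]) (simp add: in_bucket_def)
qed

lemma ye_edge_in_bucket:
  assumes "finite V" and x: "(x, v) \<in> filt_F k \<phi> idf V v c"
    and L: "L = Min ((\<lambda>(x, y). cmod (x - y)) ` filt_F k \<phi> idf V v c)"
    and i: "1 \<le> i" "in_bucket r L i (cmod (x - v))"
  obtains a where "(a, v) \<in> ye_edges k r \<phi> idf V" "(a, v) \<in> filt_F k \<phi> idf V v c"
    "in_bucket r L i (cmod (a - v))" "dID idf a v \<le> dID idf x v"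
proof -
  let ?F = "filt_F k \<phi> idf V v c"
  let ?B = "{(b, w) \<in> ?F. in_bucket r L i (cmod (b - w))}"
  have "?B \<subseteq> udg_edges V"
    unfolding filt_F_def using yao_edges_subset by blast
  then have "finite ?B"
    using finite_udg_edges[OF assms(1)] finite_subset by blast
  then obtain e where "is_arg_min (\<lambda>(b, w). dID idf b w) (\<lambda>e. e \<in> ?B) e"
    using ex_is_arg_min_if_finite[of ?B "\<lambda>(b, w). dID idf b w"] x i(2) by blast
  then obtain a where a: "(a, v) \<in> ?F" "in_bucket r L i (cmod (a - v))"
    and a_min: "\<forall>(b, w) \<in> ?F. in_bucket r L i (cmod (b - w)) \<longrightarrow> dID idf a v \<le> dID idf b w"
    by (cases e) (fastforce simp: is_arg_min_linorder filt_F_def)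
  have "(a, v) \<in> ?F \<and> (\<exists>i\<ge>1. in_bucket r L i (cmod (a - v)) \<and>
      (\<forall>(b, w) \<in> ?F. in_bucket r L i (cmod (b - w)) \<longrightarrow> dID idf a v \<le> dID idf b w))"
    using a a_min i(1) by blast
  then have "(a, v) \<in> ye_edges k r \<phi> idf V"
    unfolding ye_edges_def Let_def L by blast
  then show ?thesis
    using that a a_min x i(2) by blast
qed

lemma ye_edge_exists:
  assumes "finite V" "1 < r" and xv: "(x, v) \<in> yao_edges k \<phi> idf V"
  obtains a where "(a, v) \<in> ye_edges k r \<phi> idf V" "cone_idx k \<phi> v a = cone_idx k \<phi> v x"
    "cmod (a - v) \<le> cmod (x - v)" "cmod (x - v) < r * cmod (a - v)"
proof -
  define c where "c = cone_idx k \<phi> v x"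
  define F where "F = filt_F k \<phi> idf V v c"
  define L where "L = Min ((\<lambda>(x, y). cmod (x - y)) ` F)"
  have x_F: "(x, v) \<in> F"
    using xv yao_edges_subset by (fastforce simp: F_def filt_F_def in_cone_def c_def udg_edges_def)
  have F_udg: "F \<subseteq> udg_edges V"
    unfolding F_def filt_F_def using yao_edges_subset by blast
  then have "finite F"
    using finite_udg_edges[OF assms(1)] finite_subset by blast
  then have "L \<le> cmod (x - v)" "L \<in> (\<lambda>(x, y). cmod (x - y)) ` F"
    using x_F unfolding L_def by (force intro: Min_le, intro Min_in) auto
  then have "0 < L"
    using F_udg by (auto simp: udg_edges_def)
  then obtain i where i: "1 \<le> i" "in_bucket r L i (cmod (x - v))"
    using in_bucket_exists[OF assms(2)] \<open>L \<le> cmod (x - v)\<close> by blast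
  then obtain a where a: "(a, v) \<in> ye_edges k r \<phi> idf V" "(a, v) \<in> F"
    "in_bucket r L i (cmod (a - v))" "dID idf a v \<le> dID idf x v"
    using ye_edge_in_bucket[OF assms(1) x_F[unfolded F_def] L_def[unfolded F_def]] by (auto simp: F_def)
  show ?thesis
  proof
    show "(a, v) \<in> ye_edges k r \<phi> idf V"
      using a(1) .
    show "cone_idx k \<phi> v a = cone_idx k \<phi> v x"
      using a(2) by (simp add: F_def filt_F_def in_cone_def c_def)
    show "cmod (a - v) \<le> cmod (x - v)"
      using norm_le_if_dID_le a(4) .
    have "cmod (x - v) < L * r ^ i"
      using i(2) by (simp add: in_bucket_def)
    also have "\<dots> = r * (L * r ^ (i - 1))"
      using i(1) by (cases i) auto
    also have "\<dots> \<le> r * cmod (a - v)"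
      using a(3) assms(2) by (simp add: in_bucket_def)
    finally show "cmod (x - v) < r * cmod (a - v)" .
  qed
qed

definition sink_set ::
  "nat \<Rightarrow> real \<Rightarrow> real \<Rightarrow> (complex \<Rightarrow> nat) \<Rightarrow> complex set \<Rightarrow> complex \<Rightarrow> nat \<Rightarrow> complex set" where
  "sink_set k r \<phi> idf V v c = {x. (x, v) \<in> ye_edges k r \<phi> idf V \<and> in_cone k \<phi> v c x}"

lemma yes_edges_sink_set:
  "yes_edges k r \<phi> idf V = {e. \<exists>v\<in>V. \<exists>c<k. sink_tree k \<phi> idf v (sink_set k r \<phi> idf V v c) e}"
  by (simp add: yes_edges_def sink_set_def)

lemma mem_sink_set_D:
  "x \<in> sink_set k r \<phi> idf V v c \<Longrightarrow> (x, v) \<in> yao_edges k \<phi> idf V \<and> c = cone_idx k \<phi> v x"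
  by (auto simp: sink_set_def in_cone_def dest: subsetD[OF ye_edges_subset])

lemma sink_set_subset: "sink_set k r \<phi> idf V v c \<subseteq> V"
  using mem_sink_set_D yao_edges_subset by (fastforce simp: udg_edges_def)

lemma apex_notin_sink_set: "v \<notin> sink_set k r \<phi> idf V v c"
  by (simp add: sink_set_def in_cone_def)

section \<open>Stretch factor\<close>

lemma finite_measure_less_induct [consumes 2, case_names less]:
  fixes f :: "'a \<Rightarrow> 'b::linorder"
  assumes "finite A" "a \<in> A"
    and step: "\<And>a. a \<in> A \<Longrightarrow> (\<And>b. b \<in> A \<Longrightarrow> f b < f a \<Longrightarrow> P b) \<Longrightarrow> P a"
  shows "P a"
proof -
  let ?R = "{(b, a). b \<in> A \<and> a \<in> A \<and> f b < f a}"
  have "wf ?R"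
  proof (rule finite_acyclic_wf)
    have "?R \<subseteq> A \<times> A"
      by auto
    then show "finite ?R"
      using assms(1) finite_subset by blast
    have "trans ?R"
      by (auto intro: transI)
    then show "acyclic ?R"
      by (simp add: acyclic_irrefl irrefl_def)
  qed
  then show ?thesis
    using assms(2) by (induction rule: wf_induct_rule) (auto intro: step)
qed

text \<open>For a Yao edge xv replaced by the kept edge av: the detour x \<leadsto> a costs at most
  t (A - b d) by induction and the sink path a \<leadsto> v at most b / d, where A = |xv|, b = |av|.\<close>

lemma yao_detour_bound:
  fixes t d r A b :: real
  assumes d: "0 < d" "d \<le> 1" and "0 \<le> t" "0 < b" "A < r * b"
    and stretch: "1 \<le> t * d * (d * (r + 1) - r)"
  shows "t * (A - b * d) + b / d \<le> t * d * A"
proof -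
  have "b / d \<le> b / d * (t * d * (d * (r + 1) - r))"
    using mult_left_mono[OF stretch, of "b / d"] assms(4) d by simp
  also have "\<dots> = t * (b * d - r * b * (1 - d))"
    using d by (simp add: field_simps)
  also have "\<dots> \<le> t * (b * d - A * (1 - d))"
    using assms(3,5) d by (intro mult_left_mono) (auto intro: mult_right_mono)
  finally show ?thesis
    by (simp add: algebra_simps)
qed

locale yes_stretch =
  fixes V :: "complex set" and idf :: "complex \<Rightarrow> nat" and k :: nat and r \<phi> t :: real
  assumes finite_V: "finite V" and k_ge_2: "2 \<le> k" and r_gt_1: "1 < r"
    and gap_margin: "0 < cone_gap k * (r + 1) - r"
    and stretch: "1 \<le> t * cone_gap k * (cone_gap k * (r + 1) - r)"
begin

lemma gap_pos: "0 < cone_gap k"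
proof -
  have "0 < cone_gap k * (r + 1)"
    using gap_margin r_gt_1 by linarith
  then show ?thesis
    using r_gt_1 by (simp add: zero_less_mult_iff)
qed

lemma t_pos: "0 < t"
proof -
  have "0 < cone_gap k * (cone_gap k * (r + 1) - r)"
    using gap_pos gap_margin by (rule mult_pos_pos)
  moreover have "0 < t * (cone_gap k * (cone_gap k * (r + 1) - r))"
    using stretch by (simp add: mult.assoc)
  ultimately show ?thesis
    using zero_less_mult_pos2 by blast
qed

lemma ye_edge_reach_within:
  assumes "(a, v) \<in> ye_edges k r \<phi> idf V"
  shows "reach_within (YES k r \<phi> idf V) a v (cmod (a - v) / cone_gap k)"
proof -
  obtain c where "(a, v) \<in> filt_F k \<phi> idf V v c"
    using assms by (auto simp: ye_edges_def)
  then have a: "a \<in> sink_set k r \<phi> idf V v c" and "c < k" "v \<in> V"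
    using assms k_ge_2 cone_idx_less[of k]
    by (auto simp: filt_F_def sink_set_def in_cone_def yao_edges_def udg_edges_def)
  have "sink_tree k \<phi> idf v (sink_set k r \<phi> idf V v c) e \<Longrightarrow> e \<in> YES k r \<phi> idf V" for e
    using \<open>c < k\<close> \<open>v \<in> V\<close> by (auto simp: YES_def yes_edges_sink_set)
  then show ?thesis
    using sink_tree_reach_within[OF k_ge_2 gap_pos] finite_subset[OF sink_set_subset finite_V]
      apex_notin_sink_set a by metis
qed

lemma yao_edge_reach_within:
  assumes xv: "(x, v) \<in> yao_edges k \<phi> idf V"
    and shorter: "\<And>p q. (p, q) \<in> udg_edges V \<Longrightarrow> cmod (p - q) < cmod (x - v)
      \<Longrightarrow> reach_within (YES k r \<phi> idf V) p q (t * cmod (q - p))"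
  shows "reach_within (YES k r \<phi> idf V) x v (t * cone_gap k * cmod (x - v))"
proof -
  obtain a where a: "(a, v) \<in> ye_edges k r \<phi> idf V" "cone_idx k \<phi> v a = cone_idx k \<phi> v x"
    and closer: "cmod (a - v) \<le> cmod (x - v)" and comparable: "cmod (x - v) < r * cmod (a - v)"
    using ye_edge_exists[OF finite_V r_gt_1 xv] .
  have "(x, v) \<in> udg_edges V" "(a, v) \<in> udg_edges V"
    using xv a(1) ye_edges_subset yao_edges_subset by blast+
  then have x: "x \<in> V" "cmod (x - v) \<le> 1" and "a \<in> V" "0 < cmod (a - v)"
    by (auto simp: udg_edges_def)
  have detour: "cmod (x - a) \<le> cmod (x - v) - cmod (a - v) * cone_gap k"
    using same_cone_dist_le[OF k_ge_2 a(2)[symmetric] closer] .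
  have "reach_within (YES k r \<phi> idf V) x a (t * (cmod (x - v) - cmod (a - v) * cone_gap k))"
  proof (cases "a = x")
    case True
    then show ?thesis
      using detour t_pos by (auto intro: reach_within.refl)
  next
    case False
    have "cmod (x - a) < cmod (x - v)"
      using detour gap_pos \<open>0 < cmod (a - v)\<close> by (smt (verit) mult_pos_pos)
    then have "reach_within (YES k r \<phi> idf V) x a (t * cmod (a - x))"
      using shorter False x \<open>a \<in> V\<close> by (simp add: udg_edges_def)
    then show ?thesis
      using detour t_pos by (auto simp: norm_minus_commute elim!: reach_within_mono)
  qed
  then have "reach_within (YES k r \<phi> idf V) x v
      (t * (cmod (x - v) - cmod (a - v) * cone_gap k) + cmod (a - v) / cone_gap k)"
    using reach_within_trans ye_edge_reach_within[OF a(1)] by blast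
  then show ?thesis
    using yao_detour_bound[OF gap_pos cone_gap_le_1[OF k_ge_2] _ _ comparable stretch] t_pos
      \<open>0 < cmod (a - v)\<close> reach_within_mono by fastforce
qed

lemma non_yao_edge_reach_within:
  assumes uv: "(u, v) \<in> udg_edges V" "(u, v) \<notin> yao_edges k \<phi> idf V"
    and shorter: "\<And>p q. (p, q) \<in> udg_edges V \<Longrightarrow> cmod (p - q) < cmod (u - v)
      \<Longrightarrow> reach_within (YES k r \<phi> idf V) p q (t * cmod (q - p))"
  shows "reach_within (YES k r \<phi> idf V) u v (t * cmod (v - u))"
proof -
  obtain w where uw: "(u, w) \<in> yao_edges k \<phi> idf V" "cone_idx k \<phi> u w = cone_idx k \<phi> u v"
    and closer: "cmod (u - w) \<le> cmod (u - v)"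
    using yao_edge_exists[OF finite_V uv(1)] .
  have "(u, w) \<in> udg_edges V"
    using uw(1) yao_edges_subset by blast
  then have "w \<in> V" "u \<noteq> w"
    by (auto simp: udg_edges_def)
  have "w \<noteq> v"
    using uw(1) uv(2) by auto
  have detour: "cmod (v - w) \<le> cmod (v - u) - cmod (w - u) * cone_gap k"
    using same_cone_dist_le[OF k_ge_2 uw(2)[symmetric]] closer by (simp add: norm_minus_commute)
  then have "cmod (w - v) < cmod (u - v)"
    using gap_pos \<open>u \<noteq> w\<close> by (smt (verit) mult_pos_pos norm_minus_commute zero_less_norm_iff right_minus_eq)
  then have "reach_within (YES k r \<phi> idf V) w v (t * cmod (v - w))"
    using shorter uv(1) \<open>w \<noteq> v\<close> \<open>w \<in> V\<close> by (auto simp: udg_edges_def)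
  moreover have "reach_within (YES k r \<phi> idf V) u w (t * cone_gap k * cmod (u - w))"
    using yao_edge_reach_within[OF uw(1)] shorter closer by fastforce
  ultimately have "reach_within (YES k r \<phi> idf V) u v (t * cone_gap k * cmod (u - w) + t * cmod (v - w))"
    using reach_within_trans by blast
  moreover have "t * cone_gap k * cmod (u - w) + t * cmod (v - w) \<le> t * cmod (v - u)"
    using mult_left_mono[OF detour, of t] t_pos by (simp add: norm_minus_commute algebra_simps)
  ultimately show ?thesis
    using reach_within_mono by blast
qed

lemma udg_edge_reach_within:
  assumes "(u, v) \<in> udg_edges V"
  shows "reach_within (YES k r \<phi> idf V) u v (t * cmod (v - u))"
  using finite_udg_edges[OF finite_V] assms
proof (induction "(u, v)" arbitrary: u v rule: finite_measure_less_induct[where f = "\<lambda>(p, q). cmod (p - q)"])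
  case less
  have shorter: "reach_within (YES k r \<phi> idf V) p q (t * cmod (q - p))"
    if "(p, q) \<in> udg_edges V" "cmod (p - q) < cmod (u - v)" for p q
    using less that by auto
  show ?case
  proof (cases "(u, v) \<in> yao_edges k \<phi> idf V")
    case True
    have "cone_gap k * cmod (u - v) \<le> cmod (v - u)"
      using gap_pos cone_gap_le_1[OF k_ge_2] by (simp add: mult_left_le_one_le norm_minus_commute)
    then have "t * cone_gap k * cmod (u - v) \<le> t * cmod (v - u)"
      using t_pos by (simp add: mult.assoc)
    then show ?thesis
      using yao_edge_reach_within[OF True shorter] reach_within_mono by blast
  next
    case False
    then show ?thesis
      using non_yao_edge_reach_within[OF _ False shorter] less by simp
  qed
qed

theorem YES_length_spanner: "is_length_spanner V (YES k r \<phi> idf V) (udg_edges V) t"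
  using is_length_spanner_if_edges_stretched[OF t_pos] udg_edge_reach_within by blast

end

lemma gap_poly_ineq:
  fixes c s r :: real
  assumes cs: "c\<^sup>2 + s\<^sup>2 = 1" and s: "0 \<le> s" "s < c" and r: "1 < r"
  shows "(c + s) * ((1 + 2 * r * c) * (c - s) - 2 * r * c) \<le> (c - s) * (r + 1) - r"
proof -
  define d where "d = c - s"
  define X where "X = 2 * c * (c + s) - 1"
  have "s * s \<le> c * c"
    using s by (intro mult_mono) auto
  then have "1 \<le> 2 * (c * c)"
    using cs by (simp add: power2_eq_square)
  moreover have "0 \<le> c * s"
    using s by simp
  moreover have "X = 2 * (c * c) + 2 * (c * s) - 1"
    by (simp add: X_def algebra_simps)
  ultimately have "0 \<le> X"
    by linarith
  have "c \<le> 1"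
    using cs s by (smt (verit) power2_le_imp_le one_power2 zero_le_power2)
  then have d: "0 \<le> d" "d \<le> 1" "d\<^sup>2 \<le> c"
    using s by (auto simp: d_def power2_eq_square intro: order.trans[OF mult_left_le])
  have "(c - s) * (r + 1) - r - (c + s) * ((1 + 2 * r * c) * (c - s) - 2 * r * c)
      = (r - 1) * ((1 - d) * X) + 2 * s * (c - d\<^sup>2)"
    using cs unfolding d_def X_def by algebra
  moreover have "0 \<le> (r - 1) * ((1 - d) * X)"
    using r d \<open>0 \<le> X\<close> by simp
  moreover have "0 \<le> 2 * s * (c - d\<^sup>2)"
    using s d by simp
  ultimately show ?thesis
    by linarith
qed

lemma stretch_conditions:
  fixes c s r lam t :: real
  assumes cs: "c\<^sup>2 + s\<^sup>2 = 1" and s: "0 \<le> s" and c: "0 < c" and r: "1 < r"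
    and lam: "lam = 1 / (2 * r * c)" and gap: "1 / (lam + 1) < c - s"
    and t: "lam / (c\<^sup>2 - s\<^sup>2) / ((lam + 1) * (c - s) - 1) \<le> t"
  shows "0 < (c - s) * (r + 1) - r" "1 \<le> t * (c - s) * ((c - s) * (r + 1) - r)"
proof -
  define d e q where "d = c - s" and "e = (lam + 1) * (c - s) - 1" and "q = (c - s) * (r + 1) - r"
  have "0 < lam"
    using lam c r by simp
  then have "1 < (lam + 1) * d"
    using gap by (simp add: d_def divide_less_eq mult.commute)
  then have "0 < e" "0 < d"
    using zero_less_mult_pos[of "lam + 1" d] \<open>0 < lam\<close> by (auto simp: e_def d_def)
  define D where "D = (c + s) * e"
  have "0 < D"
    using s c \<open>0 < e\<close> by (simp add: D_def)
  have "(1 + 2 * r * c) * (c - s) - 2 * r * c = 2 * r * c * e"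
    using c r unfolding e_def lam by (simp add: field_simps)
  then have q: "2 * r * c * D \<le> q"
    using gap_poly_ineq[OF cs s _ r] \<open>0 < d\<close> by (simp add: q_def d_def D_def ac_simps)
  moreover have pos: "0 < 2 * r * c * D"
    using c r \<open>0 < D\<close> by simp
  ultimately show "0 < q"
    by linarith
  have "1 \<le> q / (2 * r * c * D)"
    using q pos by simp
  also have "\<dots> = lam / (D * d) * (d * q)"
    using c r \<open>0 < D\<close> \<open>0 < d\<close> unfolding lam by (simp add: field_simps)
  also have "D * d = (c\<^sup>2 - s\<^sup>2) * e"
    by (simp add: D_def d_def power2_eq_square algebra_simps)
  also have "lam / ((c\<^sup>2 - s\<^sup>2) * e) * (d * q) \<le> t * (d * q)"
    using t \<open>0 < q\<close> \<open>0 < d\<close> by (intro mult_right_mono) (simp_all add: e_def divide_divide_eq_left)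
  finally show "1 \<le> t * (c - s) * q"
    by (simp add: d_def mult.assoc)
qed

section \<open>Degree bound\<close>

lemma card_le_UN_bound:
  assumes "finite I" "A \<subseteq> (\<Union>i\<in>I. B i)"
    and "\<And>i. i \<in> I \<Longrightarrow> finite (B i)" "\<And>i. i \<in> I \<Longrightarrow> card (B i) \<le> m"
  shows "card A \<le> card I * m"
proof -
  have "card A \<le> card (\<Union>i\<in>I. B i)"
    using assms(1-3) by (intro card_mono) auto
  also have "\<dots> \<le> (\<Sum>i\<in>I. card (B i))"
    using assms(1) by (rule card_UN_le)
  also have "\<dots> \<le> card I * m"
    using sum_bounded_above[of I "\<lambda>i. card (B i)" m] assms(4) by simp
  finally show ?thesis .
qed

lemma in_other_sink_tree:
  assumes "sink_tree k \<phi> idf R (sink_set k r \<phi> idf V R c) e" "v \<in> {fst e, snd e}" "v \<noteq> R"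
  shows "(v, R) \<in> yao_edges k \<phi> idf V" "c = cone_idx k \<phi> R v"
  using sink_tree_endpoints[OF assms(1)] assms(2,3) mem_sink_set_D by blast+

context
  fixes V :: "complex set" and idf :: "complex \<Rightarrow> nat" and k :: nat and r \<phi> :: real
  assumes finite_V: "finite V" and inj: "inj_on idf V" and k: "0 < k"
begin

lemma sink_set_conditions:
  "finite (sink_set k r \<phi> idf V R c)" "inj_on idf (sink_set k r \<phi> idf V R c)"
    "R \<notin> sink_set k r \<phi> idf V R c"
  using sink_set_subset finite_V inj apex_notin_sink_set by (metis finite_subset inj_on_subset)+

lemma yao_out_neighbours:
  "finite {R. (v, R) \<in> yao_edges k \<phi> idf V}" "card {R. (v, R) \<in> yao_edges k \<phi> idf V} \<le> k"
proof -
  have "{R. (v, R) \<in> yao_edges k \<phi> idf V} \<subseteq> V"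
    by (auto dest!: subsetD[OF yao_edges_subset] simp: udg_edges_def)
  then show "finite {R. (v, R) \<in> yao_edges k \<phi> idf V}"
    using finite_V finite_subset by blast
  show "card {R. (v, R) \<in> yao_edges k \<phi> idf V} \<le> k"
    using card_yao_out_le[OF inj k] .
qed

lemma card_yes_out_le: "card {u. (v, u) \<in> yes_edges k r \<phi> idf V} \<le> k"
proof -
  let ?tree = "\<lambda>R c. sink_tree k \<phi> idf R (sink_set k r \<phi> idf V R c)"
  let ?roots = "{R. (v, R) \<in> yao_edges k \<phi> idf V}"
  have "{u. (v, u) \<in> yes_edges k r \<phi> idf V} \<subseteq> (\<Union>R\<in>?roots. {u. ?tree R (cone_idx k \<phi> R v) (v, u)})"
  proof
    fix u
    assume "u \<in> {u. (v, u) \<in> yes_edges k r \<phi> idf V}"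
    then obtain R c where tree: "?tree R c (v, u)"
      by (auto simp: yes_edges_sink_set)
    moreover have "v \<noteq> R"
      using sink_tree_endpoints[OF tree] sink_set_conditions(3) by auto
    ultimately show "u \<in> (\<Union>R\<in>?roots. {u. ?tree R (cone_idx k \<phi> R v) (v, u)})"
      using in_other_sink_tree[OF tree] by auto
  qed
  then have "card {u. (v, u) \<in> yes_edges k r \<phi> idf V} \<le> card ?roots * 1"
    using finite_sink_tree_neighbours(2)[OF sink_set_conditions(1)]
      card_sink_tree_parents_le[OF sink_set_conditions]
    by (intro card_le_UN_bound[OF yao_out_neighbours(1)])
  then show ?thesis
    using yao_out_neighbours(2)[of v] by linarith
qed

lemma card_yes_in_le: "card {u. (u, v) \<in> yes_edges k r \<phi> idf V} \<le> k + k * k"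
proof -
  let ?In = "{u. (u, v) \<in> yes_edges k r \<phi> idf V}"
  let ?tree = "\<lambda>R c. sink_tree k \<phi> idf R (sink_set k r \<phi> idf V R c)"
  let ?roots = "{R. (v, R) \<in> yao_edges k \<phi> idf V}"
  define own where "own = (\<Union>c\<in>{..<k}. {w. ?tree v c (w, v)})"
  define other where "other = (\<Union>R\<in>?roots. {w. ?tree R (cone_idx k \<phi> R v) (w, v)})"
  have "?In \<subseteq> own \<union> other"
    unfolding own_def other_def yes_edges_sink_set using in_other_sink_tree by fastforce
  then have "card ?In \<le> card (?In \<inter> own) + card (?In \<inter> other)"
    using card_Un_le[of "?In \<inter> own" "?In \<inter> other"] by (simp add: Int_absorb2 flip: Int_Un_distrib)
  moreover have "card (?In \<inter> own) \<le> card {..<k} * 1"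
  proof (rule card_le_UN_bound[where B = "\<lambda>c. {w. ?tree v c (w, v)}"])
    show "card {w. ?tree v c (w, v)} \<le> 1" for c
      by (rule card_sink_tree_root_children_le[where c = c, OF sink_set_conditions]) (simp add: sink_set_def)
  qed (use finite_sink_tree_neighbours(1)[OF sink_set_conditions(1)] in \<open>auto simp: own_def\<close>)
  moreover have "card (?In \<inter> other) \<le> card ?roots * k"
  proof (rule card_le_UN_bound[OF yao_out_neighbours(1), where B = "\<lambda>R. {w. ?tree R (cone_idx k \<phi> R v) (w, v)}"])
    show "card {w. ?tree R (cone_idx k \<phi> R v) (w, v)} \<le> k" for R
      by (rule card_sink_tree_children_le[OF sink_set_conditions k])
  qed (use finite_sink_tree_neighbours(1)[OF sink_set_conditions(1)] in \<open>auto simp: other_def\<close>)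
  moreover have "card ?roots * k \<le> k * k"
    using yao_out_neighbours(2)[of v] by (rule mult_le_mono1)
  ultimately show ?thesis
    unfolding card_lessThan by linarith
qed

theorem degree_YES_le: "degree (YES k r \<phi> idf V) v \<le> k * (k + 2)"
proof -
  have "degree (YES k r \<phi> idf V) v
      = card ({u. (v, u) \<in> yes_edges k r \<phi> idf V} \<union> {u. (u, v) \<in> yes_edges k r \<phi> idf V})"
    unfolding degree_def YES_def by (rule arg_cong[where f = card]) auto
  also have "\<dots> \<le> k + (k + k * k)"
    using card_Un_le card_yes_out_le card_yes_in_le by (meson add_mono order_trans)
  finally show ?thesis
    by (simp add: algebra_simps)
qed

end

theorem theorem2:
  fixes V :: "complex set" and idf :: "complex \<Rightarrow> nat" and k :: nat
    and r \<phi> \<theta> lam :: real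
  assumes "finite V"
    and "inj_on idf V"
    and "connected_graph V (udg_edges V)"
    and "r > 1"
    and "k \<ge> 8"
    and "\<theta> = 2 * pi / real k"
    and "lam = 1 / (2 * r * cos \<theta>)"
    and "cos \<theta> - sin \<theta> > 1 / (lam + 1)"
  shows "(\<forall>v\<in>V. degree (YES k r \<phi> idf V) v \<le> k * (k + 2)) \<and>
         (\<forall>t::real. t \<ge> (lam / cos (2 * \<theta>)) / ((lam + 1) * (cos \<theta> - sin \<theta>) - 1)
            \<longrightarrow> is_length_spanner V (YES k r \<phi> idf V) (udg_edges V) t)"
proof (intro conjI allI impI ballI)
  fix v
  show "degree (YES k r \<phi> idf V) v \<le> k * (k + 2)"
    using degree_YES_le[OF assms(1,2)] assms(5) by simp
next
  fix t :: real
  assume t: "(lam / cos (2 * \<theta>)) / ((lam + 1) * (cos \<theta> - sin \<theta>) - 1) \<le> t"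
  have "\<theta> \<le> 2 * pi / 8"
    unfolding assms(6) using assms(5) by (intro divide_left_mono) auto
  moreover have "0 < \<theta>"
    using assms(5,6) by simp
  ultimately have "0 \<le> sin \<theta>" "0 < cos \<theta>"
    by (auto intro!: sin_ge_zero cos_gt_zero)
  then have "0 < (cos \<theta> - sin \<theta>) * (r + 1) - r"
    and "1 \<le> t * (cos \<theta> - sin \<theta>) * ((cos \<theta> - sin \<theta>) * (r + 1) - r)"
    using stretch_conditions[OF sin_cos_squared_add2 _ _ assms(4,7,8)] t by (simp_all add: cos_double)
  then interpret yes_stretch V idf k r \<phi> t
    using assms(1,4,5,6) by unfold_locales (simp_all add: cone_gap_def)
  show "is_length_spanner V (YES k r \<phi> idf V) (udg_edges V) t"
    by (rule YES_length_spanner)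
qed

end
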